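(* Let $\mathcal{F}\subseteq[\omega]^{<\omega}$ be a compact hereditary family covering $\omega$. A vector $y\in X^{\mathcal{F}}$ is an extreme point of the unit ball $B_{X^\mathcal{F}}=\{x\in X^\mathcal{F}:\lVert x\rVert^\mathcal{F}\le1\}$ if and only if there are $F\in\mathcal{F}^{MAX}$ and signs $\varepsilon_i\in\{-1,1\}$ ($i\in F$) such that $y(i)=\varepsilon_i$ for $i\in F$ and $y(i)=0$ for $i\notin F$.
   Context: $\omega=\{1,2,3,\dots\}$; $[\omega]^{<\omega}$ is the family of finite subsets of $\omega$, identified with elements of $2^\omega$; compact means compact in $2^\omega$; hereditary means closed under subsets. A partition is a family $\mathcal{P}\subseteq\mathcal{P}(\omega)$ with $\emptyset\in\mathcal{P}$, $\bigcup\mathcal{P}=\omega$, elements pairwise disjoint; $\mathbb{P}_\mathcal{F}$ is the set of partitions contained in $\mathcal{F}$. For $x\in\mathbb{R}^\omega$, $\lVert x\rVert^{\mathcal{F}}=\inf_{\mathcal{P}\in\mathbb{P}_\mathcal{F}}\sum_{F\in\mathcal{P}}\sup_{k\in F}|x(k)|$. $X^\mathcal{F}=\{x\in\mathbb{R}^\omega:\lim_n\lVert P_{\omega\setminus n}x\rVert^\mathcal{F}=0\}$, where $P_{\omega\setminus n}x$ agrees with $x$ on $\{n+1,\dots\}$ and is zero elsewhere. $\mathcal{F}^{MAX}$ is the set of maximal elements of $\mathcal{F}$, i.e. $F\in\mathcal{F}$ with $F\cup\{k\}\notin\mathcal{F}$ for every $k\in\omega\setminus F$. A point $e$ of a set $K$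 (not necessarily convex) is an extreme point of $K$ if there are no $x,z\in K$ different from $e$ and $t\in(0,1)$ with $e=(1-t)x+tz$. *)

theory Defs
  imports "HOL-Analysis.Analysis"
begin

text \<open>omega is rendered as the type nat (a relabelling of {1,2,3,...}).\<close>

definition cantor_top :: "(nat \<Rightarrow> bool) topology" where
  "cantor_top = product_topology (\<lambda>_. discrete_topology UNIV) UNIV"

definition compact_family :: "nat set set \<Rightarrow> bool" where
  "compact_family \<F> \<longleftrightarrow> compactin cantor_top ((\<lambda>A n. n \<in> A) ` \<F>)"

definition hereditary :: "nat set set \<Rightarrow> bool" where
  "hereditary \<F> \<longleftrightarrow> (\<forall>A \<in> \<F>. \<forall>B. B \<subseteq> A \<longrightarrow> B \<in> \<F>)"

definition is_partition :: "nat set set \<Rightarrow> bool" where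
  "is_partition \<P> \<longleftrightarrow> {} \<in> \<P> \<and> \<Union>\<P> = UNIV \<and>
     (\<forall>A \<in> \<P>. \<forall>B \<in> \<P>. A \<noteq> B \<longrightarrow> A \<inter> B = {})"

definition partitions_in :: "nat set set \<Rightarrow> nat set set set" where
  "partitions_in \<F> = {\<P>. is_partition \<P> \<and> \<P> \<subseteq> \<F>}"

text \<open>The (extended) norm; values in ennreal so that the infinite sums and
  infimum are always defined (sup over the empty set is 0).\<close>
definition normF :: "nat set set \<Rightarrow> (nat \<Rightarrow> real) \<Rightarrow> ennreal" where
  "normF \<F> x = (INF \<P> \<in> partitions_in \<F>.
      (\<Sum>\<^sub>\<infinity> A\<in>\<P>. (SUP k\<in>A. ennreal \<bar>x k\<bar>)))"

definition tailproj :: "nat \<Rightarrow> (nat \<Rightarrow> real) \<Rightarrow> (nat \<Rightarrow> real)" where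
  "tailproj n x = (\<lambda>k. if n < k then x k else 0)"

definition XF :: "nat set set \<Rightarrow> (nat \<Rightarrow> real) set" where
  "XF \<F> = {x. (\<lambda>n. normF \<F> (tailproj n x)) \<longlonglongrightarrow> 0}"

definition unit_ball_XF :: "nat set set \<Rightarrow> (nat \<Rightarrow> real) set" where
  "unit_ball_XF \<F> = {x \<in> XF \<F>. normF \<F> x \<le> 1}"

definition maximal_elems :: "nat set set \<Rightarrow> nat set set" where
  "maximal_elems \<F> = {F \<in> \<F>. \<forall>k. k \<notin> F \<longrightarrow> insert k F \<notin> \<F>}"

definition extreme_pt :: "(nat \<Rightarrow> real) \<Rightarrow> (nat \<Rightarrow> real) set \<Rightarrow> bool" where
  "extreme_pt e K \<longleftrightarrow> e \<in> K \<and>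
     \<not> (\<exists>x \<in> K. \<exists>z \<in> K. \<exists>t::real. x \<noteq> e \<and> z \<noteq> e \<and> 0 < t \<and> t < 1 \<and>
          e = (\<lambda>i. (1 - t) * x i + t * z i))"

end

theory Submission
  imports Defs "HOL-Library.Diagonal_Subsequence"
begin

text \<open>The norm is an infimum of block sums over partitions drawn from \<open>\<F>\<close>, and this infimum
is attained: along a subsequence of almost optimal partitions the relation ``\<open>j\<close> lies in the
block of \<open>i\<close>'' stabilises for every pair, the stabilised blocks lie in \<open>\<F>\<close> by compactness, and
every finite part of their block sum is eventually dominated by the block sums of the sequence.

Let \<open>y\<close> be extreme and \<open>P\<close> an optimal partition. If \<open>y\<close> were nonzero on two blocks \<open>A\<close>, \<open>B\<close>
with block maxima \<open>a\<close>, \<open>b\<close>, scaling \<open>y\<close> by \<open>1 \<plusminus> b\<close> on \<open>A\<close> and by \<open>1 \<minusplus> a\<close> on \<open>B\<close> would keep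
the block sum and split \<open>y\<close> symmetrically inside the ball. So \<open>y\<close> lives on one \<open>G \<in> \<F>\<close>, and
pushing a coordinate of modulus below one in \<open>G\<close>, or a coordinate outside a non-maximal \<open>G\<close>,
towards \<open>\<plusminus>1\<close> is again such a splitting. Conversely, if \<open>|y| = 1\<close> on a maximal \<open>G\<close> and \<open>y = 0\<close>
elsewhere, strict convexity of \<open>[-1, 1]\<close> at \<open>\<plusminus>1\<close> pins every decomposition of \<open>y\<close> on \<open>G\<close>, and
since no block of a partition contains \<open>G\<close> together with an index \<open>j \<notin> G\<close>, a point \<open>x\<close> of such
a decomposition has norm at least \<open>1 + |x j|\<close>, forcing \<open>x j = 0\<close>.\<close>

lemma subseq_eventually_constant:
  fixes b :: "nat \<Rightarrow> nat \<Rightarrow> bool"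
  shows "\<exists>\<sigma>. strict_mono \<sigma> \<and> (\<forall>k. \<exists>c. \<forall>\<^sub>F m in sequentially. b k (\<sigma> m) = c)"
proof -
  interpret subseqs "\<lambda>k s. \<exists>c. \<forall>\<^sub>F m in sequentially. b k (s m) = c"
  proof
    fix k and s :: "nat \<Rightarrow> nat"
    obtain m0 where "infinite {m. b k (s m) = b k (s m0)}"
      using pigeonhole_infinite[of UNIV "\<lambda>m. b k (s m)"] by auto
    then obtain r :: "nat \<Rightarrow> nat" where "strict_mono r" "\<And>n. b k (s (r n)) = b k (s m0)"
      using infinite_enumerate by blast
    then show "\<exists>r. strict_mono r \<and> (\<exists>c. \<forall>\<^sub>F m in sequentially. b k ((s \<circ> r) m) = c)"
      by (auto intro: always_eventually)
  qed
  have "\<exists>c. \<forall>\<^sub>F m in sequentially. b k (diagseq m) = c" for k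
  proof -
    have "\<exists>c. \<forall>\<^sub>F m in sequentially. b k ((diagseq \<circ> (+) (Suc k)) m) = c"
    proof (rule diagseq_holds)
      fix r s :: "nat \<Rightarrow> nat" and n
      assume "strict_mono r" and "\<exists>c. \<forall>\<^sub>F m in sequentially. b n (s m) = c"
      then show "\<exists>c. \<forall>\<^sub>F m in sequentially. b n ((s \<circ> r) m) = c"
        using eventually_compose_filterlim[OF _ filterlim_subseq] by fastforce
    qed
    then obtain c where "\<forall>\<^sub>F m in sequentially. b k (diagseq (m + Suc k)) = c"
      by (auto simp: add.commute)
    then show ?thesis
      using eventually_sequentially_seg[of "\<lambda>m. b k (diagseq m) = c"] by blast
  qed
  then show ?thesis
    using subseq_diagseq by blast
qed

lemma compact_family_contains_if_finite_subsets:
  assumes "compact_family \<F>" and "\<And>T. finite T \<Longrightarrow> T \<subseteq> S \<Longrightarrow> T \<in> \<F>"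
  shows "S \<in> \<F>"
proof -
  \<comment> \<open>\<open>S\<close> is the pointwise limit of \<open>S \<inter> {..N}\<close>, and compact sets of the Cantor space are closed.\<close>
  have closed: "closedin cantor_top ((\<lambda>A n. n \<in> A) ` \<F>)"
    using assms(1) unfolding compact_family_def cantor_top_def
    by (intro compactin_imp_closedin) (simp add: Hausdorff_space_product_topology)
  define f where "f N = (\<lambda>k. k \<in> S \<inter> {..N})" for N :: nat
  have lim: "limitin cantor_top f (\<lambda>k. k \<in> S) sequentially"
    unfolding cantor_top_def limitin_componentwise
  proof (intro conjI ballI)
    fix k :: nat
    have "\<forall>\<^sub>F N in sequentially. f N k = (k \<in> S)"
      using eventually_ge_at_top[of k] by (rule eventually_mono) (auto simp: f_def)
    then show "limitin (discrete_topology UNIV) (\<lambda>N. f N k) (k \<in> S) sequentially"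
      unfolding limitin_def by (auto elim: eventually_mono)
  qed auto
  have ev: "\<forall>\<^sub>F N in sequentially. f N \<in> (\<lambda>A n. n \<in> A) ` \<F>"
  proof (intro always_eventually allI)
    fix N
    show "f N \<in> (\<lambda>A n. n \<in> A) ` \<F>"
      using assms(2)[of "S \<inter> {..N}"] unfolding f_def by (intro image_eqI) auto
  qed
  have "(\<lambda>k. k \<in> S) \<in> (\<lambda>A n. n \<in> A) ` \<F>"
    by (rule limitin_closedin[OF lim closed ev]) simp
  then show ?thesis
    by (auto simp: fun_eq_iff set_eq_iff[symmetric])
qed

definition block_sup :: "(nat \<Rightarrow> real) \<Rightarrow> nat set \<Rightarrow> ennreal" where
  "block_sup x A = (SUP k\<in>A. ennreal \<bar>x k\<bar>)"

definition block_sum :: "nat set set \<Rightarrow> (nat \<Rightarrow> real) \<Rightarrow> ennreal" where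
  "block_sum P x = (\<Sum>\<^sub>\<infinity> A\<in>P. block_sup x A)"

lemma normF_eq_INF_block_sum: "normF \<F> x = (INF P\<in>partitions_in \<F>. block_sum P x)"
  unfolding normF_def block_sum_def block_sup_def ..

lemma normF_le_block_sum: "P \<in> partitions_in \<F> \<Longrightarrow> normF \<F> x \<le> block_sum P x"
  unfolding normF_eq_INF_block_sum by (rule INF_lower)

lemma block_sup_empty [simp]: "block_sup x {} = 0"
  by (simp add: block_sup_def bot_ennreal)

lemma coord_le_block_sup: "k \<in> A \<Longrightarrow> ennreal \<bar>x k\<bar> \<le> block_sup x A"
  unfolding block_sup_def by (rule SUP_upper)

lemma block_sup_mono: "A \<subseteq> B \<Longrightarrow> block_sup x A \<le> block_sup x B"
  unfolding block_sup_def by (rule SUP_subset_mono) auto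

lemma block_sup_cong: "(\<And>k. k \<in> A \<Longrightarrow> \<bar>x k\<bar> = \<bar>z k\<bar>) \<Longrightarrow> block_sup x A = block_sup z A"
  unfolding block_sup_def by (rule SUP_cong) auto

lemma block_sup_scale:
  assumes "0 \<le> \<alpha>" and "\<And>k. k \<in> A \<Longrightarrow> x k = \<alpha> * y k"
  shows "block_sup x A = ennreal \<alpha> * block_sup y A"
  unfolding block_sup_def using assms
  by (simp add: abs_mult ennreal_mult SUP_mult_left_ennreal[symmetric])

lemma sum_block_sup_le_block_sum:
  assumes "finite D" and "D \<subseteq> P"
  shows "sum (block_sup x) D \<le> block_sum P x"
proof -
  have "sum (block_sup x) D = (\<Sum>\<^sub>\<infinity> A\<in>D. block_sup x A)"
    using assms(1) by simp
  also have "\<dots> \<le> block_sum P x"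
    unfolding block_sum_def using assms(2)
    by (intro infsum_mono_neutral nonneg_summable_on_complete) auto
  finally show ?thesis .
qed

lemma block_sup_le_block_sum: "A \<in> P \<Longrightarrow> block_sup x A \<le> block_sum P x"
  using sum_block_sup_le_block_sum[of "{A}" P x] by simp

definition block_of :: "nat set set \<Rightarrow> nat \<Rightarrow> nat set" where
  "block_of P i = (THE A. A \<in> P \<and> i \<in> A)"

lemma block_of_eq:
  assumes "is_partition P" and "A \<in> P" and "i \<in> A"
  shows "block_of P i = A"
  unfolding block_of_def
  by (rule the_equality) (use assms in \<open>auto simp: is_partition_def\<close>)

lemma block_of_in_partition:
  assumes "is_partition P"
  shows "block_of P i \<in> P" and "i \<in> block_of P i"
proof -
  obtain A where "A \<in> P" "i \<in> A"
    using assms unfolding is_partition_def by blast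
  then show "block_of P i \<in> P" and "i \<in> block_of P i"
    using block_of_eq[OF assms] by auto
qed

lemma partition_with_block:
  assumes "hereditary \<F>" and "\<Union>\<F> = UNIV" and "G \<in> \<F>"
  shows "insert {} (insert G {{j} |j. j \<notin> G}) \<in> partitions_in \<F>"
proof -
  have "{j} \<in> \<F>" for j
    using assms(1,2) unfolding hereditary_def by blast
  moreover have "{} \<in> \<F>"
    using assms(1,3) unfolding hereditary_def by blast
  moreover have "\<Union>(insert {} (insert G {{j} |j. j \<notin> G})) = UNIV"
    by blast
  ultimately show ?thesis
    using assms(3) unfolding partitions_in_def is_partition_def by blast
qed

definition limit_block :: "(nat \<Rightarrow> nat set set) \<Rightarrow> nat \<Rightarrow> nat set" where
  "limit_block P i = {j. \<forall>\<^sub>F n in sequentially. j \<in> block_of (P n) i}"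

lemma mem_limit_block_self: "(\<And>n. is_partition (P n)) \<Longrightarrow> i \<in> limit_block P i"
  unfolding limit_block_def by (simp add: block_of_in_partition)

lemma limit_block_eq:
  assumes P: "\<And>n. is_partition (P n)" and "j \<in> limit_block P i"
  shows "limit_block P j = limit_block P i"
proof -
  have same: "\<forall>\<^sub>F n in sequentially. block_of (P n) j = block_of (P n) i"
    using assms(2) unfolding limit_block_def mem_Collect_eq
    by (rule eventually_mono) (intro block_of_eq P block_of_in_partition)
  have "(\<forall>\<^sub>F n in sequentially. l \<in> block_of (P n) j) \<longleftrightarrow>
      (\<forall>\<^sub>F n in sequentially. l \<in> block_of (P n) i)" for l
    by (rule eventually_subst) (use same in \<open>auto elim: eventually_mono\<close>)
  then show ?thesis
    unfolding limit_block_def by simp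
qed

lemma is_partition_limit_blocks:
  assumes "\<And>n. is_partition (P n)"
  shows "is_partition (insert {} (range (limit_block P)))"
  unfolding is_partition_def
proof (intro conjI ballI impI)
  show "\<Union>(insert {} (range (limit_block P))) = UNIV"
  proof -
    have "i \<in> limit_block P i" for i
      by (rule mem_limit_block_self[OF assms])
    then show ?thesis by auto
  qed
next
  fix A B assume A: "A \<in> insert {} (range (limit_block P))"
    and B: "B \<in> insert {} (range (limit_block P))" and "A \<noteq> B"
  show "A \<inter> B = {}"
  proof (rule ccontr)
    assume "A \<inter> B \<noteq> {}"
    then obtain l where l: "l \<in> A" "l \<in> B" by blast
    with A B obtain i j where "A = limit_block P i" "B = limit_block P j" by auto
    with l have "A = B"
      using limit_block_eq[of P, OF assms] by metis
    with \<open>A \<noteq> B\<close> show False ..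
  qed
qed simp

lemma limit_block_in_family:
  assumes "compact_family \<F>" and "hereditary \<F>" and P: "\<And>n. P n \<in> partitions_in \<F>"
  shows "limit_block P i \<in> \<F>"
proof (rule compact_family_contains_if_finite_subsets[OF assms(1)])
  fix T assume "finite T" and "T \<subseteq> limit_block P i"
  then have "\<forall>\<^sub>F n in sequentially. T \<subseteq> block_of (P n) i"
    unfolding limit_block_def by (simp add: eventually_ball_finite subset_eq)
  then obtain n where "T \<subseteq> block_of (P n) i"
    by (auto dest: eventually_happens)
  moreover have "block_of (P n) i \<in> \<F>"
    using P[of n] block_of_in_partition(1)[of "P n" i] unfolding partitions_in_def by auto
  ultimately show "T \<in> \<F>"
    using assms(2) unfolding hereditary_def by blast
qed

lemma sum_block_sup_limit_blocks_eventually_le: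
  assumes P: "\<And>n. is_partition (P n)"
    and const: "\<And>i j. \<exists>c. \<forall>\<^sub>F n in sequentially. (j \<in> block_of (P n) i) = c"
    and D: "finite D" "D \<subseteq> range (limit_block P)" and fin: "\<And>C. C \<in> D \<Longrightarrow> finite C"
  shows "\<forall>\<^sub>F n in sequentially. sum (block_sup x) D \<le> block_sum (P n) x"
proof -
  define S where "S = \<Union>D"
  have "finite S"
    unfolding S_def using D(1) fin by blast
  have "\<forall>\<^sub>F n in sequentially. (j \<in> block_of (P n) i) = (j \<in> limit_block P i)" for i j
  proof -
    obtain c where c: "\<forall>\<^sub>F n in sequentially. (j \<in> block_of (P n) i) = c"
      using const by blast
    then have "c = (j \<in> limit_block P i)"
      unfolding limit_block_def
      by (cases c) (auto dest: eventually_happens' eventually_conj[OF c])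
    with c show ?thesis by simp
  qed
  then have "\<forall>\<^sub>F n in sequentially. \<forall>i\<in>S. \<forall>j\<in>S. (j \<in> block_of (P n) i) = (j \<in> limit_block P i)"
    using \<open>finite S\<close> by (simp add: eventually_ball_finite)
  then show ?thesis
  proof (rule eventually_mono)
    fix n assume stable: "\<forall>i\<in>S. \<forall>j\<in>S. (j \<in> block_of (P n) i) = (j \<in> limit_block P i)"
    \<comment> \<open>On the finite set \<open>S\<close> the blocks of \<open>P n\<close> now agree with the limit blocks, so every
      \<open>C \<in> D\<close> is the trace on \<open>S\<close> of a block of \<open>P n\<close>.\<close>
    have "D \<subseteq> (\<lambda>A. A \<inter> S) ` block_of (P n) ` S"
    proof
      fix C assume "C \<in> D"
      then obtain i where C: "C = limit_block P i" using D(2) by blast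
      then have "i \<in> S" "limit_block P i \<subseteq> S"
        using \<open>C \<in> D\<close> mem_limit_block_self[OF P] unfolding S_def by auto
      then have "C = block_of (P n) i \<inter> S"
        using stable C by auto
      with \<open>i \<in> S\<close> show "C \<in> (\<lambda>A. A \<inter> S) ` block_of (P n) ` S" by blast
    qed
    then have "sum (block_sup x) D \<le> sum (block_sup x) ((\<lambda>A. A \<inter> S) ` block_of (P n) ` S)"
      using \<open>finite S\<close> by (intro sum_mono2) auto
    also have "\<dots> \<le> sum (block_sup x \<circ> (\<lambda>A. A \<inter> S)) (block_of (P n) ` S)"
      using \<open>finite S\<close> by (intro sum_image_le) auto
    also have "\<dots> \<le> sum (block_sup x) (block_of (P n) ` S)"
      by (intro sum_mono) (simp add: block_sup_mono)
    also have "\<dots> \<le> block_sum (P n) x"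
      using \<open>finite S\<close> block_of_in_partition(1)[OF P]
      by (intro sum_block_sup_le_block_sum) auto
    finally show "sum (block_sup x) D \<le> block_sum (P n) x" .
  qed
qed

lemma block_sum_limit_blocks_le:
  assumes part: "\<And>n. is_partition (P n)"
    and const: "\<And>i j. \<exists>c. \<forall>\<^sub>F n in sequentially. (j \<in> block_of (P n) i) = c"
    and fin: "\<And>i. finite (limit_block P i)"
    and lim: "(\<lambda>n. block_sum (P n) x) \<longlonglongrightarrow> L"
  shows "block_sum (insert {} (range (limit_block P))) x \<le> L"
  unfolding block_sum_def
proof (rule infsum_le_finite_sums)
  show "block_sup x summable_on insert {} (range (limit_block P))"
    by (rule nonneg_summable_on_complete) simp
next
  fix D assume D: "finite D" "D \<subseteq> insert {} (range (limit_block P))"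
  have "sum (block_sup x) D = sum (block_sup x) (D - {{}})"
    using D(1) by (intro sum.mono_neutral_right) auto
  moreover have "\<forall>\<^sub>F n in sequentially. sum (block_sup x) (D - {{}}) \<le> block_sum (P n) x"
    using D fin by (intro sum_block_sup_limit_blocks_eventually_le[OF part const]) auto
  ultimately show "sum (block_sup x) D \<le> L"
    using lim by (metis tendsto_lowerbound trivial_limit_sequentially)
qed

lemma normF_attained:
  assumes fin: "\<forall>A \<in> \<F>. finite A" and cf: "compact_family \<F>" and her: "hereditary \<F>"
    and cov: "\<Union>\<F> = UNIV"
  shows "\<exists>P \<in> partitions_in \<F>. block_sum P x = normF \<F> x"
proof -
  have empty: "{} \<in> \<F>"
    using her cov unfolding hereditary_def by blast
  then have "partitions_in \<F> \<noteq> {}"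
    using partition_with_block[OF her cov] by blast
  then obtain u where u: "\<forall>n. u n \<in> (\<lambda>P. block_sum P x) ` partitions_in \<F>"
    and u_lim: "u \<longlonglongrightarrow> normF \<F> x"
    using Inf_as_limit[of "(\<lambda>P. block_sum P x) ` partitions_in \<F>"]
    unfolding normF_eq_INF_block_sum by auto
  obtain P where P: "\<And>n. P n \<in> partitions_in \<F>" and u_eq: "\<And>n. u n = block_sum (P n) x"
    using u unfolding image_iff Bex_def choice_iff by blast
  have "u = (\<lambda>n. block_sum (P n) x)"
    using u_eq by (rule ext)
  with u_lim have lim: "(\<lambda>n. block_sum (P n) x) \<longlonglongrightarrow> normF \<F> x"
    by simp
  \<comment> \<open>One diagonal subsequence for all pairs \<open>(i, j)\<close>, coded as natural numbers.\<close>
  obtain \<sigma> where \<sigma>: "strict_mono \<sigma>" and const_code: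
    "\<forall>k. \<exists>c. \<forall>\<^sub>F m in sequentially.
      (snd (prod_decode k) \<in> block_of (P (\<sigma> m)) (fst (prod_decode k))) = c"
    using subseq_eventually_constant[of
        "\<lambda>k m. snd (prod_decode k) \<in> block_of (P m) (fst (prod_decode k))"]
    by blast
  define P' where "P' = P \<circ> \<sigma>"
  have P': "\<And>n. P' n \<in> partitions_in \<F>" and part: "\<And>n. is_partition (P' n)"
    using P unfolding P'_def partitions_in_def by auto
  have const: "\<exists>c. \<forall>\<^sub>F m in sequentially. (j \<in> block_of (P' m) i) = c" for i j
    using const_code[rule_format, of "prod_encode (i, j)"] unfolding P'_def by simp
  define Q where "Q = insert {} (range (limit_block P'))"
  have Q: "Q \<in> partitions_in \<F>"
    using is_partition_limit_blocks[OF part] limit_block_in_family[OF cf her P'] empty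
    unfolding Q_def partitions_in_def by auto
  have "(\<lambda>n. block_sum (P' n) x) \<longlonglongrightarrow> normF \<F> x"
    using LIMSEQ_subseq_LIMSEQ[OF lim \<sigma>] unfolding P'_def by (simp add: comp_def)
  then have "block_sum Q x \<le> normF \<F> x"
    unfolding Q_def using fin limit_block_in_family[OF cf her P']
    by (intro block_sum_limit_blocks_le[OF part const]) auto
  then show ?thesis
    using Q normF_le_block_sum[OF Q, of x] by (intro bexI[of _ Q]) auto
qed

lemma XF_finite_modification:
  assumes "x \<in> XF \<F>" and "finite {k. z k \<noteq> x k}"
  shows "z \<in> XF \<F>"
proof -
  obtain M where M: "\<And>k. z k \<noteq> x k \<Longrightarrow> k \<le> M"
    using assms(2) finite_nat_set_iff_bounded_le by auto
  have "tailproj n x = tailproj n z" if "M \<le> n" for n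
    unfolding tailproj_def fun_eq_iff using M that by (metis le_trans not_le)
  then have "\<forall>\<^sub>F n in sequentially. normF \<F> (tailproj n x) = normF \<F> (tailproj n z)"
    unfolding eventually_sequentially by (intro exI[of _ M]) auto
  with assms(1) show ?thesis
    unfolding XF_def by (auto intro: Lim_transform_eventually)
qed

lemma coord_le_normF: "ennreal \<bar>x k\<bar> \<le> normF \<F> x"
  unfolding normF_eq_INF_block_sum
proof (rule INF_greatest)
  fix P assume "P \<in> partitions_in \<F>"
  then have "is_partition P"
    unfolding partitions_in_def by simp
  then show "ennreal \<bar>x k\<bar> \<le> block_sum P x"
    by (metis block_of_in_partition block_sup_le_block_sum coord_le_block_sup order_trans)
qed

lemma abs_le_one_if_in_unit_ball:
  assumes "x \<in> unit_ball_XF \<F>"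
  shows "\<bar>x k\<bar> \<le> 1"
proof -
  have "normF \<F> x \<le> 1"
    using assms unfolding unit_ball_XF_def by simp
  with coord_le_normF have "ennreal \<bar>x k\<bar> \<le> 1"
    by (rule order_trans)
  then show ?thesis
    by (simp add: ennreal_le_1)
qed

lemma block_sum_eq_block_sup_if_supported:
  assumes "is_partition P" and "G \<in> P" and "\<And>k. k \<notin> G \<Longrightarrow> x k = 0"
  shows "block_sum P x = block_sup x G"
proof -
  have "block_sum P x = (\<Sum>\<^sub>\<infinity> A\<in>{G}. block_sup x A)"
    unfolding block_sum_def
  proof (rule infsum_cong_neutral)
    fix A assume "A \<in> P - {G}"
    then have "A \<inter> G = {}"
      using assms(1,2) unfolding is_partition_def by blast
    then show "block_sup x A = 0"
      unfolding block_sup_def bot_ennreal[symmetric] SUP_bot_conv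
      using assms(3) by (auto simp: bot_ennreal)
  qed (use assms(2) in auto)
  then show ?thesis by simp
qed

lemma normF_le_one_if_supported_in:
  assumes "hereditary \<F>" and "\<Union>\<F> = UNIV" and "G \<in> \<F>"
    and "\<And>k. k \<notin> G \<Longrightarrow> x k = 0" and "\<And>k. \<bar>x k\<bar> \<le> 1"
  shows "normF \<F> x \<le> 1"
proof -
  let ?P = "insert {} (insert G {{j} |j. j \<notin> G})"
  have P: "?P \<in> partitions_in \<F>"
    by (rule partition_with_block[OF assms(1-3)])
  then have "block_sum ?P x = block_sup x G"
    using assms(4) unfolding partitions_in_def
    by (intro block_sum_eq_block_sup_if_supported) auto
  also have "\<dots> \<le> 1"
    unfolding block_sup_def using assms(5) by (intro SUP_least) simp
  finally show ?thesis
    using normF_le_block_sum[OF P] by (rule order_trans[rotated])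
qed

lemma normF_update_le_one:
  assumes "hereditary \<F>" and "\<Union>\<F> = UNIV" and "G \<in> \<F>" and "k \<in> G"
    and "\<And>j. j \<notin> G \<Longrightarrow> y j = 0" and "\<And>j. \<bar>y j\<bar> \<le> 1" and "\<bar>v\<bar> \<le> 1"
  shows "normF \<F> (y(k := v)) \<le> 1"
  by (rule normF_le_one_if_supported_in[OF assms(1-3)]) (use assms(4-7) in auto)

lemma extreme_pt_unit_ball_no_symmetric_perturbation:
  assumes ext: "extreme_pt y (unit_ball_XF \<F>)" and fin: "finite {k. d k \<noteq> 0}"
    and "normF \<F> (\<lambda>k. y k + d k) \<le> 1" and "normF \<F> (\<lambda>k. y k - d k) \<le> 1"
  shows "d k = 0"
proof (rule ccontr)
  assume "d k \<noteq> 0"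
  have "y \<in> XF \<F>"
    using ext unfolding extreme_pt_def unit_ball_XF_def by simp
  moreover have "{j. y j + d j \<noteq> y j} = {j. d j \<noteq> 0}" "{j. y j - d j \<noteq> y j} = {j. d j \<noteq> 0}"
    by auto
  ultimately have "(\<lambda>k. y k + d k) \<in> unit_ball_XF \<F>" and "(\<lambda>k. y k - d k) \<in> unit_ball_XF \<F>"
    using assms(3,4) fin XF_finite_modification unfolding unit_ball_XF_def by auto
  moreover have "(\<lambda>k. y k + d k) \<noteq> y" and "(\<lambda>k. y k - d k) \<noteq> y"
    using \<open>d k \<noteq> 0\<close> by (auto simp: fun_eq_iff)
  moreover have "y = (\<lambda>k. (1 - 1/2) * (y k + d k) + 1/2 * (y k - d k))"
    by (simp add: fun_eq_iff field_simps)
  moreover have "0 < (1/2 :: real)" and "(1/2 :: real) < 1"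
    by simp_all
  ultimately show False
    using ext unfolding extreme_pt_def by blast
qed

lemma extreme_pt_unit_ball_no_perturbation_at:
  assumes ext: "extreme_pt y (unit_ball_XF \<F>)"
    and "normF \<F> (y(k := y k + c)) \<le> 1" and "normF \<F> (y(k := y k - c)) \<le> 1"
  shows "c = 0"
proof -
  define d where "d j = (if j = k then c else 0)" for j
  have "(\<lambda>j. y j + d j) = y(k := y k + c)" and "(\<lambda>j. y j - d j) = y(k := y k - c)"
    unfolding d_def by auto
  moreover have "finite {j. d j \<noteq> 0}"
    unfolding d_def by simp
  ultimately have "d k = 0"
    using extreme_pt_unit_ball_no_symmetric_perturbation[OF ext] assms(2,3) by metis
  then show ?thesis
    unfolding d_def by simp
qed

lemma normF_ge_coord_outside_maximal:
  assumes her: "hereditary \<F>" and G: "G \<in> maximal_elems \<F>" and "j \<notin> G"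
    and c: "\<And>g. g \<in> G \<Longrightarrow> c \<le> \<bar>x g\<bar>"
  shows "ennreal c + ennreal \<bar>x j\<bar> \<le> normF \<F> x"
  unfolding normF_eq_INF_block_sum
proof (rule INF_greatest)
  fix P assume "P \<in> partitions_in \<F>"
  then have P: "is_partition P" and "P \<subseteq> \<F>"
    unfolding partitions_in_def by auto
  define A where "A = block_of P j"
  have "A \<in> \<F>" "j \<in> A"
    using block_of_in_partition[OF P] \<open>P \<subseteq> \<F>\<close> unfolding A_def by auto
  have "\<not> G \<subseteq> A"
  proof
    assume "G \<subseteq> A"
    then have "insert j G \<in> \<F>"
      using her \<open>A \<in> \<F>\<close> \<open>j \<in> A\<close> unfolding hereditary_def by blast
    with G \<open>j \<notin> G\<close> show False
      unfolding maximal_elems_def by blast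
  qed
  then obtain g where "g \<in> G" "g \<notin> A" by blast
  define B where "B = block_of P g"
  have "B \<in> P" "g \<in> B" "A \<in> P" "B \<noteq> A"
    using block_of_in_partition[OF P] \<open>g \<notin> A\<close> unfolding A_def B_def by auto
  have "ennreal c + ennreal \<bar>x j\<bar> \<le> block_sup x B + block_sup x A"
    using c[OF \<open>g \<in> G\<close>] coord_le_block_sup[OF \<open>g \<in> B\<close>, of x]
      coord_le_block_sup[OF \<open>j \<in> A\<close>, of x]
    by (intro add_mono) (auto intro: order_trans ennreal_leI)
  also have "\<dots> = sum (block_sup x) {B, A}"
    using \<open>B \<noteq> A\<close> by simp
  also have "\<dots> \<le> block_sum P x"
    using \<open>B \<in> P\<close> \<open>A \<in> P\<close> by (intro sum_block_sup_le_block_sum) auto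
  finally show "ennreal c + ennreal \<bar>x j\<bar> \<le> block_sum P x" .
qed

lemma convex_combination_eq_if_abs_eq_one:
  fixes u v t :: real
  assumes "\<bar>u\<bar> \<le> 1" and "\<bar>v\<bar> \<le> 1" and "0 < t" and "t < 1"
    and "\<bar>(1 - t) * u + t * v\<bar> = 1"
  shows "u = (1 - t) * u + t * v"
proof -
  obtain s :: real where s: "s = 1 \<or> s = -1" and "s * ((1 - t) * u + t * v) = 1"
    using assms(5) by (metis abs_if mult_1 mult_minus_left minus_minus)
  then have "(1 - t) * (1 - s * u) + t * (1 - s * v) = 0"
    by (simp add: algebra_simps)
  moreover have "0 \<le> (1 - t) * (1 - s * u)" and "0 \<le> t * (1 - s * v)"
    using s assms(1-4) by (auto simp: abs_le_iff)
  ultimately have "(1 - t) * (1 - s * u) = 0"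
    by linarith
  then have "s * u = 1"
    using assms(4) by simp
  with s \<open>s * ((1 - t) * u + t * v) = 1\<close> show ?thesis
    by auto
qed

lemma extreme_pt_if_unimodular_on_maximal:
  assumes her: "hereditary \<F>" and cov: "\<Union>\<F> = UNIV" and "y \<in> XF \<F>"
    and G: "G \<in> maximal_elems \<F>" and one: "\<And>i. i \<in> G \<Longrightarrow> \<bar>y i\<bar> = 1"
    and zero: "\<And>i. i \<notin> G \<Longrightarrow> y i = 0"
  shows "extreme_pt y (unit_ball_XF \<F>)"
proof -
  have "G \<in> \<F>"
    using G unfolding maximal_elems_def by simp
  have "\<bar>y k\<bar> \<le> 1" for k
    using one zero by (cases "k \<in> G") auto
  then have "normF \<F> y \<le> 1"
    using normF_le_one_if_supported_in[OF her cov \<open>G \<in> \<F>\<close>] zero by blast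
  then have y: "y \<in> unit_ball_XF \<F>"
    using \<open>y \<in> XF \<F>\<close> unfolding unit_ball_XF_def by simp
  have "x = y" if x: "x \<in> unit_ball_XF \<F>" and z: "z \<in> unit_ball_XF \<F>" and t: "0 < t" "t < 1"
    and comb: "y = (\<lambda>i. (1 - t) * x i + t * z i)" for x z t
  proof
    fix k
    have on_G: "x i = y i" if "i \<in> G" for i
      using convex_combination_eq_if_abs_eq_one[OF abs_le_one_if_in_unit_ball[OF x]
          abs_le_one_if_in_unit_ball[OF z] t] one[OF that] comb
      by simp
    show "x k = y k"
    proof (cases "k \<in> G")
      case False
      have "ennreal 1 + ennreal \<bar>x k\<bar> \<le> normF \<F> x"
        using normF_ge_coord_outside_maximal[OF her G False, of 1 x] on_G one by simp
      also have "\<dots> \<le> 1"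
        using x unfolding unit_ball_XF_def by simp
      finally have "x k = 0"
        by (simp add: ennreal_plus[symmetric] del: ennreal_plus)
      with False zero show ?thesis by simp
    qed (rule on_G)
  qed
  with y show ?thesis
    unfolding extreme_pt_def by blast
qed

lemma infsum_ennreal_eq_if_two_terms_rebalanced:
  fixes f g :: "'a \<Rightarrow> ennreal"
  assumes "a \<in> S" and "b \<in> S" and "a \<noteq> b"
    and "\<And>c. c \<in> S - {a, b} \<Longrightarrow> f c = g c" and "f a + f b = g a + g b"
  shows "infsum f S = infsum g S"
proof -
  have split: "infsum h S = infsum h (S - {a, b}) + (h a + h b)" for h :: "'a \<Rightarrow> ennreal"
  proof -
    have "infsum h ((S - {a, b}) \<union> {a, b}) = infsum h (S - {a, b}) + infsum h {a, b}"
      by (intro infsum_Un_disjoint nonneg_summable_on_complete) auto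
    moreover have "(S - {a, b}) \<union> {a, b} = S"
      using assms(1,2) by blast
    ultimately have "infsum h S = infsum h (S - {a, b}) + infsum h {a, b}"
      by simp
    then show ?thesis
      using assms(3) by simp
  qed
  show ?thesis
    using split[of f] split[of g] infsum_cong[of "S - {a, b}" f g] assms(4,5) by simp
qed

lemma block_sum_rescale_two_blocks:
  assumes P: "is_partition P" and AB: "A \<in> P" "B \<in> P" "A \<noteq> B" and "0 \<le> \<alpha>" "0 \<le> \<beta>"
    and x: "\<And>k. k \<in> A \<Longrightarrow> x k = \<alpha> * y k" "\<And>k. k \<in> B \<Longrightarrow> x k = \<beta> * y k"
      "\<And>k. k \<notin> A \<union> B \<Longrightarrow> x k = y k"
    and balance: "ennreal \<alpha> * block_sup y A + ennreal \<beta> * block_sup y B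
      = block_sup y A + block_sup y B"
  shows "block_sum P x = block_sum P y"
  unfolding block_sum_def
proof (rule infsum_ennreal_eq_if_two_terms_rebalanced[OF AB])
  show "block_sup x A + block_sup x B = block_sup y A + block_sup y B"
    using block_sup_scale[OF \<open>0 \<le> \<alpha>\<close> x(1)] block_sup_scale[OF \<open>0 \<le> \<beta>\<close> x(2)] balance
    by simp
  fix C assume "C \<in> P - {A, B}"
  then have "C \<inter> (A \<union> B) = {}"
    using P AB unfolding is_partition_def by blast
  then have "k \<notin> A \<union> B" if "k \<in> C" for k
    using that by blast
  then show "block_sup x C = block_sup y C"
    by (intro block_sup_cong) (simp add: x(3))
qed

lemma ennreal_mult_add_eq:
  assumes "0 \<le> p" "0 \<le> q" "0 \<le> r" "0 \<le> s" and "p * r + q * s = r + s"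
  shows "ennreal p * ennreal r + ennreal q * ennreal s = ennreal r + ennreal s"
  using assms by (simp add: ennreal_mult[symmetric] ennreal_plus[symmetric] del: ennreal_plus)

lemma block_sum_transfer_mass:
  assumes P: "is_partition P" and AB: "A \<in> P" "B \<in> P" "A \<noteq> B"
    and a: "block_sup y A = ennreal a" "0 \<le> a" "a \<le> 1"
    and b: "block_sup y B = ennreal b" "0 \<le> b" "b \<le> 1" and "\<bar>s\<bar> \<le> 1"
  shows "block_sum P (\<lambda>k. if k \<in> A then (1 + s * b) * y k else if k \<in> B then (1 - s * a) * y k else y k)
    = block_sum P y"
proof (rule block_sum_rescale_two_blocks[OF P AB])
  have "\<bar>s * a\<bar> \<le> 1" "\<bar>s * b\<bar> \<le> 1"
    using a b \<open>\<bar>s\<bar> \<le> 1\<close> by (simp_all add: abs_mult mult_le_one)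
  then show "0 \<le> 1 + s * b" "0 \<le> 1 - s * a"
    by (simp_all add: abs_le_iff)
  then show "ennreal (1 + s * b) * block_sup y A + ennreal (1 - s * a) * block_sup y B
      = block_sup y A + block_sup y B"
    unfolding a(1) b(1) using a b by (intro ennreal_mult_add_eq) (auto simp: algebra_simps)
  have "A \<inter> B = {}"
    using P AB unfolding is_partition_def by blast
  then show "\<And>k. k \<in> B \<Longrightarrow> (if k \<in> A then (1 + s * b) * y k else if k \<in> B then (1 - s * a) * y k else y k)
      = (1 - s * a) * y k"
    by auto
qed auto

lemma block_sup_le_one_real:
  assumes "block_sup y C \<le> 1"
  shows "block_sup y C = ennreal (enn2real (block_sup y C))"
    and "enn2real (block_sup y C) \<le> 1"
    and "k \<in> C \<Longrightarrow> \<bar>y k\<bar> \<le> enn2real (block_sup y C)"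
proof -
  show real: "block_sup y C = ennreal (enn2real (block_sup y C))"
    and "enn2real (block_sup y C) \<le> 1"
    using assms by (auto simp: ennreal_enn2real_if enn2real_leI top_unique)
  show "\<bar>y k\<bar> \<le> enn2real (block_sup y C)" if "k \<in> C"
    using coord_le_block_sup[OF that, of y] real by (metis abs_ge_zero ennreal_le_iff enn2real_nonneg)
qed

lemma extreme_pt_vanishes_outside_one_block:
  assumes fin: "\<forall>A \<in> \<F>. finite A" and P: "P \<in> partitions_in \<F>" and "block_sum P y \<le> 1"
    and ext: "extreme_pt y (unit_ball_XF \<F>)"
    and AB: "A \<in> P" "B \<in> P" "A \<noteq> B" and "a \<in> A" "y a \<noteq> 0" and "b \<in> B"
  shows "y b = 0"
proof (rule ccontr)
  assume "y b \<noteq> 0"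
  have part: "is_partition P" and "finite A" "finite B"
    using P AB fin unfolding partitions_in_def by auto
  have "block_sup y C \<le> 1" if "C \<in> P" for C
    using block_sup_le_block_sum[OF that] \<open>block_sum P y \<le> 1\<close> by (rule order_trans)
  note real = block_sup_le_one_real[OF this]
  define ma where "ma = enn2real (block_sup y A)"
  define mb where "mb = enn2real (block_sup y B)"
  have ma: "block_sup y A = ennreal ma" "0 \<le> ma" "ma \<le> 1"
    and mb: "block_sup y B = ennreal mb" "0 < mb" "mb \<le> 1"
    using real[OF AB(1)] real[OF AB(2)] real(3)[OF AB(2) \<open>b \<in> B\<close>] \<open>y b \<noteq> 0\<close>
    unfolding ma_def mb_def by (auto simp: less_le_trans)
  define d where "d k = (if k \<in> A then mb * y k else if k \<in> B then - ma * y k else 0)" for k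
  have "(\<lambda>k. y k + s * d k) =
      (\<lambda>k. if k \<in> A then (1 + s * mb) * y k else if k \<in> B then (1 - s * ma) * y k else y k)" for s
    unfolding d_def by (auto simp: algebra_simps)
  then have "block_sum P (\<lambda>k. y k + s * d k) = block_sum P y" if "\<bar>s\<bar> \<le> 1" for s
    using block_sum_transfer_mass[OF part AB ma mb(1) _ mb(3) that] mb(2) by simp
  then have norm_le: "normF \<F> (\<lambda>k. y k + s * d k) \<le> 1" if "\<bar>s\<bar> \<le> 1" for s
    using normF_le_block_sum[OF P, of "\<lambda>k. y k + s * d k"] \<open>block_sum P y \<le> 1\<close> that by simp
  have "{k. d k \<noteq> 0} \<subseteq> A \<union> B"
    unfolding d_def by auto
  then have "finite {k. d k \<noteq> 0}"
    using \<open>finite A\<close> \<open>finite B\<close> by (simp add: finite_subset)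
  moreover have "normF \<F> (\<lambda>k. y k + d k) \<le> 1" and "normF \<F> (\<lambda>k. y k - d k) \<le> 1"
    using norm_le[of 1] norm_le[of "-1"] by simp_all
  ultimately have "d a = 0"
    by (rule extreme_pt_unit_ball_no_symmetric_perturbation[OF ext])
  with \<open>a \<in> A\<close> \<open>y a \<noteq> 0\<close> mb show False
    unfolding d_def by simp
qed

lemma extreme_pt_supported_in_member:
  assumes fin: "\<forall>A \<in> \<F>. finite A" and cf: "compact_family \<F>" and her: "hereditary \<F>"
    and cov: "\<Union>\<F> = UNIV" and ext: "extreme_pt y (unit_ball_XF \<F>)"
  obtains G where "G \<in> \<F>" and "\<And>k. k \<notin> G \<Longrightarrow> y k = 0"
proof -
  obtain P where P: "P \<in> partitions_in \<F>" and "block_sum P y = normF \<F> y"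
    using normF_attained[OF fin cf her cov] by blast
  with ext have "block_sum P y \<le> 1"
    unfolding extreme_pt_def unit_ball_XF_def by simp
  have part: "is_partition P"
    using P unfolding partitions_in_def by simp
  \<comment> \<open>\<open>a\<close> is a point of the support of \<open>y\<close>, if the support is nonempty.\<close>
  obtain a where a: "\<And>k. y k \<noteq> 0 \<Longrightarrow> y a \<noteq> 0"
    by blast
  have "y k = 0" if "k \<notin> block_of P a" for k
  proof (rule ccontr)
    assume "y k \<noteq> 0"
    moreover have "block_of P k \<noteq> block_of P a"
      using block_of_in_partition(2)[OF part, of k] that by auto
    ultimately show False
      using extreme_pt_vanishes_outside_one_block[OF fin P \<open>block_sum P y \<le> 1\<close> ext]
        block_of_in_partition[OF part] a by metis
  qed
  moreover have "block_of P a \<in> \<F>"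
    using P block_of_in_partition(1)[OF part] unfolding partitions_in_def by auto
  ultimately show thesis
    using that by blast
qed

lemma extreme_pt_abs_eq_one_on_support:
  assumes her: "hereditary \<F>" and cov: "\<Union>\<F> = UNIV" and ext: "extreme_pt y (unit_ball_XF \<F>)"
    and G: "G \<in> \<F>" and zero: "\<And>j. j \<notin> G \<Longrightarrow> y j = 0" and "k \<in> G"
  shows "\<bar>y k\<bar> = 1"
proof -
  have "y \<in> unit_ball_XF \<F>"
    using ext unfolding extreme_pt_def by simp
  then have bounded: "\<And>j. \<bar>y j\<bar> \<le> 1"
    by (rule abs_le_one_if_in_unit_ball)
  have "1 - \<bar>y k\<bar> = 0"
    using bounded[of k]
    by (intro extreme_pt_unit_ball_no_perturbation_at[OF ext, where k = k]
        normF_update_le_one[OF her cov G \<open>k \<in> G\<close> zero bounded]) (auto simp: abs_if)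
  then show ?thesis
    by simp
qed

lemma extreme_pt_support_maximal:
  assumes her: "hereditary \<F>" and cov: "\<Union>\<F> = UNIV" and ext: "extreme_pt y (unit_ball_XF \<F>)"
    and G: "G \<in> \<F>" and zero: "\<And>j. j \<notin> G \<Longrightarrow> y j = 0"
  shows "G \<in> maximal_elems \<F>"
  unfolding maximal_elems_def
proof (intro CollectI conjI allI impI G)
  fix k assume "k \<notin> G"
  show "insert k G \<notin> \<F>"
  proof
    assume kG: "insert k G \<in> \<F>"
    have "y \<in> unit_ball_XF \<F>"
      using ext unfolding extreme_pt_def by simp
    then have bounded: "\<And>j. \<bar>y j\<bar> \<le> 1"
      by (rule abs_le_one_if_in_unit_ball)
    have update: "normF \<F> (y(k := v)) \<le> 1" if "\<bar>v\<bar> \<le> 1" for v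
      by (rule normF_update_le_one[OF her cov kG _ _ bounded that]) (auto intro: zero)
    have "y k = 0"
      using zero \<open>k \<notin> G\<close> by blast
    then have "(1::real) = 0"
      by (intro extreme_pt_unit_ball_no_perturbation_at[OF ext, where k = k]) (simp_all add: update)
    then show False
      by simp
  qed
qed

lemma ex_signs_iff_abs_eq_one:
  fixes y :: "nat \<Rightarrow> real"
  shows "(\<exists>\<epsilon> :: nat \<Rightarrow> real. (\<forall>i \<in> G. \<epsilon> i \<in> {-1, 1}) \<and> (\<forall>i \<in> G. y i = \<epsilon> i) \<and> Z)
    \<longleftrightarrow> (\<forall>i \<in> G. \<bar>y i\<bar> = 1) \<and> Z"
proof
  assume "(\<forall>i \<in> G. \<bar>y i\<bar> = 1) \<and> Z"
  moreover have "y i \<in> {-1, 1}" if "\<bar>y i\<bar> = 1" for i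
    using that by (cases "0 \<le> y i") (simp_all add: abs_of_nonneg abs_of_neg)
  ultimately show "\<exists>\<epsilon> :: nat \<Rightarrow> real. (\<forall>i \<in> G. \<epsilon> i \<in> {-1, 1}) \<and> (\<forall>i \<in> G. y i = \<epsilon> i) \<and> Z"
    by (intro exI[of _ y]) simp
qed auto

theorem mainTheorem10:
  fixes \<F> :: "nat set set" and y :: "nat \<Rightarrow> real"
  assumes "\<forall>A \<in> \<F>. finite A"
    and "compact_family \<F>"
    and "hereditary \<F>"
    and "\<Union>\<F> = UNIV"
    and "y \<in> XF \<F>"
  shows "extreme_pt y (unit_ball_XF \<F>) \<longleftrightarrow>
    (\<exists>F \<in> maximal_elems \<F>. \<exists>\<epsilon> :: nat \<Rightarrow> real.
        (\<forall>i \<in> F. \<epsilon> i \<in> {-1, 1}) \<and>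
        (\<forall>i \<in> F. y i = \<epsilon> i) \<and> (\<forall>i. i \<notin> F \<longrightarrow> y i = 0))"
  unfolding ex_signs_iff_abs_eq_one
proof
  assume ext: "extreme_pt y (unit_ball_XF \<F>)"
  obtain G where G: "G \<in> \<F>" and zero: "\<And>k. k \<notin> G \<Longrightarrow> y k = 0"
    using extreme_pt_supported_in_member[OF assms(1-4) ext] by blast
  show "\<exists>G \<in> maximal_elems \<F>. (\<forall>i \<in> G. \<bar>y i\<bar> = 1) \<and> (\<forall>i. i \<notin> G \<longrightarrow> y i = 0)"
    using extreme_pt_support_maximal[OF assms(3,4) ext G zero]
      extreme_pt_abs_eq_one_on_support[OF assms(3,4) ext G zero] zero by blast
next
  assume "\<exists>G \<in> maximal_elems \<F>. (\<forall>i \<in> G. \<bar>y i\<bar> = 1) \<and> (\<forall>i. i \<notin> G \<longrightarrow> y i = 0)"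
  then obtain G where "G \<in> maximal_elems \<F>" "\<And>i. i \<in> G \<Longrightarrow> \<bar>y i\<bar> = 1"
    "\<And>i. i \<notin> G \<Longrightarrow> y i = 0"
    by blast
  then show "extreme_pt y (unit_ball_XF \<F>)"
    by (rule extreme_pt_if_unimodular_on_maximal[OF assms(3-5)])
qed

end
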